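(* Let $\mathcal{I}\subseteq\mathcal{M}_m$ be decreasing and $f,g\in\mathcal{I}$ with $\deg f=\deg g=s\ge2$, $\operatorname{ind}(f)=\{i_1<\dots<i_s\}$ and $\operatorname{ind}(g)=\{j_1<\dots<j_s\}$, such that $i_s>i_{s-1}>j_s$ or $j_s>j_{s-1}>i_s$. Then $$\bigl|\mathrm{LTA}(m,2)\cdot f+\mathrm{LTA}(m,2)\cdot g\bigr|=\bigl|\mathrm{LTA}(m,2)\cdot f\bigr|\cdot\bigl|\mathrm{LTA}(m,2)\cdot g\bigr|.$$
   Context: $\mathcal{M}_m$: square-free monomials in $x_0,\dots,x_{m-1}$ in $\mathbf{R}_m=\mathbb{F}_2[x_0,\dots,x_{m-1}]/(x_i^2-x_i)$; $\operatorname{ind}(u)$ the variable indices, $\deg u=|\operatorname{ind}u|$. For equal-degree monomials with increasing indices, $u\preceq_{sh}v$ iff componentwise $\le$; $u\preceq v$ iff $u\preceq_{sh}v^*\mid v$ for some $v^*$; $\mathcal{I}$ decreasing if $f\in\mathcal{I}$, $g\preceq f\Rightarrow g\in\mathcal{I}$. $\mathrm{LTA}(m,2)$: pairs $(\mathbf{B},\varepsilon)$ with $\mathbf{B}=(b_{i,j})$ binary lower unitriangular $m\times m$ and $\varepsilon\in\mathbb{F}_2^m$, acting on monomial $u$ by $x_i\mapsto x_i+\sum_{j<i}b_{i,j}x_j+\varepsilon_i$ for $i\in\operatorname{ind}u$; $\mathrm{LTA}(m,2)\cdot f$ is the orbit (set of polynomials). $A+B=\{a+b:a\in A,b\in B\}$.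 *)

theory Defs
  imports Main
begin

text \<open>Elements of R_m = F_2[x_0..x_{m-1}]/(x_i^2 - x_i) are represented by their
  (unique) square-free normal form: a finite set of square-free monomials, each monomial
  being the set ind(u) of its variable indices. Addition is symmetric difference;
  the product of monomials u, v is u \<union> v (since x_i^2 = x_i).\<close>

type_synonym mono = "nat set"
type_synonym bpoly = "nat set set"

definition monomials :: "nat \<Rightarrow> mono set" where
  "monomials m = {u. u \<subseteq> {0..<m}}"

definition padd :: "bpoly \<Rightarrow> bpoly \<Rightarrow> bpoly" where
  "padd p q = (p - q) \<union> (q - p)"

definition pmul :: "bpoly \<Rightarrow> bpoly \<Rightarrow> bpoly" where
  "pmul p q = {w. odd (card {(u, v). u \<in> p \<and> v \<in> q \<and> u \<union> v = w})}"

definition pone :: bpoly where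
  "pone = {{}}"

definition pdeg :: "mono \<Rightarrow> nat" where
  "pdeg u = card u"

definition ind_list :: "mono \<Rightarrow> nat list" where
  "ind_list u = sorted_list_of_set u"

definition shift_le :: "mono \<Rightarrow> mono \<Rightarrow> bool" where
  "shift_le u v \<longleftrightarrow> card u = card v \<and>
     (\<forall>k < card u. ind_list u ! k \<le> ind_list v ! k)"

definition mono_le :: "mono \<Rightarrow> mono \<Rightarrow> bool" where
  "mono_le u v \<longleftrightarrow> (\<exists>vs. vs \<subseteq> v \<and> shift_le u vs)"

definition decreasing :: "nat \<Rightarrow> mono set \<Rightarrow> bool" where
  "decreasing m I \<longleftrightarrow> I \<subseteq> monomials m \<and>
     (\<forall>f \<in> I. \<forall>g \<in> monomials m. mono_le g f \<longrightarrow> g \<in> I)"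

text \<open>Affine image of variable x_i under (B, \<epsilon>): x_i + \<Sum>_{j<i} b_{i,j} x_j + \<epsilon>_i.
  The lower unitriangular binary matrix B is given by its strictly-lower entries b i j (j < i).\<close>
definition lin_img :: "(nat \<Rightarrow> nat \<Rightarrow> bool) \<Rightarrow> (nat \<Rightarrow> bool) \<Rightarrow> nat \<Rightarrow> bpoly" where
  "lin_img b e i = {{i}} \<union> {{j} | j. j < i \<and> b i j} \<union> (if e i then {{}} else {})"

definition lta_act :: "(nat \<Rightarrow> nat \<Rightarrow> bool) \<Rightarrow> (nat \<Rightarrow> bool) \<Rightarrow> mono \<Rightarrow> bpoly" where
  "lta_act b e u = foldr pmul (map (lin_img b e) (ind_list u)) pone"

text \<open>Orbit LTA(m,2) \<cdot> f: B ranges over lower unitriangular binary m\<times>m matrices,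
  \<epsilon> over F_2^m (only entries with indices < m are relevant, for f \<in> M_m).\<close>
definition lta_orbit :: "nat \<Rightarrow> mono \<Rightarrow> bpoly set" where
  "lta_orbit m f = {lta_act b e f | b e.
      (\<forall>i j. (i \<ge> m \<or> j \<ge> i) \<longrightarrow> \<not> b i j) \<and> (\<forall>i. i \<ge> m \<longrightarrow> \<not> e i)}"

definition sumset :: "bpoly set \<Rightarrow> bpoly set \<Rightarrow> bpoly set" where
  "sumset A B = {padd a c | a c. a \<in> A \<and> c \<in> B}"

end

theory Submission
  imports Defs
begin

text \<open>A polynomial of \<open>R_m\<close> is a Boolean function, and the polynomial is determined by it.
  Write an element of the first orbit as \<open>P \<cdot> L\<close>, where \<open>L\<close> is the image of the top
  variable \<open>x_p\<close> of \<open>f\<close> and \<open>P\<close> the product of the images of the other variables. If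
  \<open>a + c = a' + c'\<close> with \<open>a, a'\<close> in the orbit of \<open>f\<close> and \<open>c, c'\<close> in that of \<open>g\<close>, then
  \<open>D = a + a'\<close> only involves the variables of \<open>g\<close>, all below the second largest index
  \<open>q\<close> of \<open>f\<close>. Flipping \<open>x_p\<close> changes \<open>P L + P' L'\<close> by \<open>P + P'\<close> but leaves \<open>D\<close> unchanged,
  so \<open>P = P'\<close>; hence \<open>D\<close> vanishes wherever \<open>P\<close> does, and in particular wherever the
  image of \<open>x_q\<close> does. As flipping \<open>x_q\<close> complements that image but not \<open>D\<close>, \<open>D = 0\<close>.\<close>

text \<open>The value of \<open>p\<close> at the 0/1 point whose support is \<open>X\<close>.\<close>
definition peval :: "bpoly \<Rightarrow> nat set \<Rightarrow> bool" where
  "peval p X \<longleftrightarrow> odd (card {u \<in> p. u \<subseteq> X})"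

definition flip :: "nat \<Rightarrow> nat set \<Rightarrow> nat set" where
  "flip i X = (if i \<in> X then X - {i} else insert i X)"

lemma peval_cong:
  assumes "\<forall>u\<in>p. u \<subseteq> K" and "X \<inter> K = Y \<inter> K"
  shows "peval p X = peval p Y"
proof -
  have "{u \<in> p. u \<subseteq> X} = {u \<in> p. u \<subseteq> Y}"
    using assms by blast
  then show ?thesis
    unfolding peval_def by simp
qed

lemma peval_flip_other:
  assumes "\<forall>u\<in>p. u \<subseteq> K" and "i \<notin> K"
  shows "peval p (flip i X) = peval p X"
  by (rule peval_cong[OF assms(1)]) (use assms(2) in \<open>auto simp: flip_def\<close>)

lemma peval_pone: "peval pone X"
proof -
  have "{u \<in> pone. u \<subseteq> X} = {{}}"
    unfolding pone_def by auto
  then show ?thesis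
    unfolding peval_def by simp
qed

lemma finite_padd: "finite p \<Longrightarrow> finite q \<Longrightarrow> finite (padd p q)"
  unfolding padd_def by auto

lemma padd_cancel_left: "padd a c = padd a c' \<Longrightarrow> c = c'"
  unfolding padd_def by blast

lemma peval_padd:
  assumes "finite p" and "finite q"
  shows "peval (padd p q) X \<longleftrightarrow> peval p X \<noteq> peval q X"
proof -
  define A where "A = {u \<in> p. u \<subseteq> X}"
  define B where "B = {u \<in> q. u \<subseteq> X}"
  have fin: "finite A" "finite B"
    using assms by (simp_all add: A_def B_def)
  have "{u \<in> padd p q. u \<subseteq> X} = (A - B) \<union> (B - A)"
    unfolding padd_def A_def B_def by auto
  moreover have "A \<union> B = ((A - B) \<union> (B - A)) \<union> (A \<inter> B)"
    by blast
  moreover have "card (((A - B) \<union> (B - A)) \<union> (A \<inter> B)) = card ((A - B) \<union> (B - A)) + card (A \<inter> B)"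
    by (rule card_Un_disjoint) (use fin in auto)
  ultimately have "card A + card B = card {u \<in> padd p q. u \<subseteq> X} + 2 * card (A \<inter> B)"
    using card_Un_Int[OF fin] by simp
  then have "even (card A + card B) \<longleftrightarrow> even (card {u \<in> padd p q. u \<subseteq> X})"
    by simp
  then show ?thesis
    unfolding peval_def A_def[symmetric] B_def[symmetric] by auto
qed

lemma pmul_subset: "pmul p q \<subseteq> (\<lambda>(u, v). u \<union> v) ` (p \<times> q)"
proof
  fix w
  assume "w \<in> pmul p q"
  then have "odd (card {(u, v). u \<in> p \<and> v \<in> q \<and> u \<union> v = w})"
    unfolding pmul_def by simp
  then have "{(u, v). u \<in> p \<and> v \<in> q \<and> u \<union> v = w} \<noteq> {}"
    by (intro notI) simp
  then show "w \<in> (\<lambda>(u, v). u \<union> v) ` (p \<times> q)"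
    by force
qed

lemma finite_pmul: "finite p \<Longrightarrow> finite q \<Longrightarrow> finite (pmul p q)"
  by (rule finite_subset[OF pmul_subset]) auto

lemma pmul_vars: "\<forall>u\<in>p. u \<subseteq> K \<Longrightarrow> \<forall>v\<in>q. v \<subseteq> K \<Longrightarrow> \<forall>w\<in>pmul p q. w \<subseteq> K"
  using pmul_subset by fastforce

lemma peval_pmul:
  assumes "finite p" and "finite q"
  shows "peval (pmul p q) X \<longleftrightarrow> peval p X \<and> peval q X"
proof -
  define h where "h = (\<lambda>(u :: nat set, v :: nat set). u \<union> v)"
  define A where "A = {u \<in> p. u \<subseteq> X} \<times> {v \<in> q. v \<subseteq> X}"
  have finA: "finite A" and finhA: "finite (h ` A)"
    using assms by (simp_all add: A_def)
  have fibre: "{(u, v). u \<in> p \<and> v \<in> q \<and> u \<union> v = w} = {z \<in> A. h z = w}" if "w \<subseteq> X" for w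
    using that unfolding A_def h_def by auto
  have "{w \<in> pmul p q. w \<subseteq> X} = {w \<in> h ` A. odd (card {z \<in> A. h z = w})}"
  proof (intro set_eqI iffI)
    fix w
    assume w: "w \<in> {w \<in> pmul p q. w \<subseteq> X}"
    then have "odd (card {z \<in> A. h z = w})"
      using fibre unfolding pmul_def by auto
    moreover from this have "w \<in> h ` A"
      by (metis (mono_tags, lifting) card.empty even_zero empty_Collect_eq image_eqI)
    ultimately show "w \<in> {w \<in> h ` A. odd (card {z \<in> A. h z = w})}"
      by simp
  next
    fix w
    assume w: "w \<in> {w \<in> h ` A. odd (card {z \<in> A. h z = w})}"
    then have "w \<subseteq> X"
      unfolding A_def h_def by auto
    with w show "w \<in> {w \<in> pmul p q. w \<subseteq> X}"
      using fibre unfolding pmul_def by auto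
  qed
  moreover have "card A = (\<Sum>w\<in>h ` A. card {z \<in> A. h z = w})"
    using sum.group[OF finA finhA, of h "\<lambda>_. 1 :: nat"] by (simp flip: card_eq_sum)
  ultimately have "even (card A) \<longleftrightarrow> even (card {w \<in> pmul p q. w \<subseteq> X})"
    using even_sum_iff[OF finhA] by simp
  moreover have "card A = card {u \<in> p. u \<subseteq> X} * card {v \<in> q. v \<subseteq> X}"
    unfolding A_def by (rule card_cartesian_product)
  ultimately show ?thesis
    unfolding peval_def by auto
qed

text \<open>At a minimal monomial \<open>u\<close> of \<open>p + q\<close>, the sum \<open>p + q\<close> takes the value 1.\<close>
lemma bpoly_eqI_peval:
  assumes "finite p" and "finite q" and "\<And>X. peval p X = peval q X"
  shows "p = q"
proof (rule ccontr)
  assume "p \<noteq> q"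
  then have "padd p q \<noteq> {}"
    unfolding padd_def by auto
  then obtain u where "u \<in> padd p q" and "\<forall>v\<in>padd p q. v \<subseteq> u \<longrightarrow> u = v"
    using finite_has_minimal[OF finite_padd[OF assms(1,2)]] by blast
  then have "{v \<in> padd p q. v \<subseteq> u} = {u}"
    by auto
  then have "peval (padd p q) u"
    unfolding peval_def by simp
  with assms show False
    by (simp add: peval_padd)
qed

lemma finite_foldr_pmul: "\<forall>p\<in>set ps. finite p \<Longrightarrow> finite (foldr pmul ps pone)"
  by (induction ps) (simp_all add: finite_pmul pone_def)

lemma peval_foldr_pmul:
  "\<forall>p\<in>set ps. finite p \<Longrightarrow> peval (foldr pmul ps pone) X \<longleftrightarrow> (\<forall>p\<in>set ps. peval p X)"
proof (induction ps)
  case (Cons p ps)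
  then have "finite p" and "finite (foldr pmul ps pone)"
    by (simp_all add: finite_foldr_pmul)
  with Cons show ?case
    by (simp add: peval_pmul)
qed (simp add: peval_pone)

lemma foldr_pmul_vars:
  "\<forall>p\<in>set ps. \<forall>u\<in>p. u \<subseteq> K \<Longrightarrow> \<forall>w\<in>foldr pmul ps pone. w \<subseteq> K"
proof (induction ps)
  case (Cons p ps)
  then show ?case
    using pmul_vars[of p K "foldr pmul ps pone"] by simp
qed (simp add: pone_def)

lemma finite_lin_img: "finite (lin_img b e i)"
proof -
  have "{{j} | j. j < i \<and> b i j} \<subseteq> (\<lambda>j. {j}) ` {..<i}"
    by auto
  then have "finite {{j} | j. j < i \<and> b i j}"
    by (rule finite_subset) simp
  then show ?thesis
    unfolding lin_img_def by simp
qed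

lemma lin_img_vars: "\<forall>u\<in>lin_img b e i. u \<subseteq> {..i}"
  unfolding lin_img_def by auto

lemma peval_lin_img_flip: "peval (lin_img b e i) (flip i X) \<longleftrightarrow> \<not> peval (lin_img b e i) X"
proof -
  let ?l = "lin_img b e i"
  have "{u \<in> ?l. u \<subseteq> insert i Y} = insert {i} {u \<in> ?l. u \<subseteq> Y}" if "i \<notin> Y" for Y
    using that unfolding lin_img_def by auto
  moreover have "{i} \<notin> {u \<in> ?l. u \<subseteq> Y}" if "i \<notin> Y" for Y
    using that by auto
  ultimately have toggle: "peval ?l (insert i Y) \<longleftrightarrow> \<not> peval ?l Y" if "i \<notin> Y" for Y
    using that finite_lin_img[of b e i] unfolding peval_def by simp
  show ?thesis
  proof (cases "i \<in> X")
    case True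
    then show ?thesis
      using toggle[of "X - {i}"] by (simp add: flip_def insert_absorb)
  next
    case False
    then show ?thesis
      using toggle[of X] by (simp add: flip_def)
  qed
qed

lemma finite_lta_act: "finite (lta_act b e u)"
  unfolding lta_act_def by (simp add: finite_foldr_pmul finite_lin_img)

lemma peval_lta_act: "finite u \<Longrightarrow> peval (lta_act b e u) X \<longleftrightarrow> (\<forall>i\<in>u. peval (lin_img b e i) X)"
  unfolding lta_act_def ind_list_def by (simp add: peval_foldr_pmul finite_lin_img)

lemma lta_act_vars:
  assumes "finite u" and "\<forall>i\<in>u. i < q"
  shows "\<forall>w\<in>lta_act b e u. w \<subseteq> {..<q}"
  unfolding lta_act_def ind_list_def
  by (rule foldr_pmul_vars) (use assms lin_img_vars in fastforce)

lemma lta_act_eq_if_padd_eq: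
  assumes f: "finite f" "p \<in> f" "q \<in> f" "q < p" "\<forall>i\<in>f. i \<le> p"
    and g: "finite g" "\<forall>j\<in>g. j < q"
    and eq: "padd (lta_act b e f) (lta_act bc ec g) = padd (lta_act b' e' f) (lta_act bc' ec' g)"
  shows "lta_act b e f = lta_act b' e' f"
proof (rule bpoly_eqI_peval[OF finite_lta_act finite_lta_act])
  define L where "L X \<longleftrightarrow> peval (lin_img b e p) X" for X
  define L' where "L' X \<longleftrightarrow> peval (lin_img b' e' p) X" for X
  define P where "P X \<longleftrightarrow> (\<forall>i\<in>f - {p}. peval (lin_img b e i) X)" for X
  define P' where "P' X \<longleftrightarrow> (\<forall>i\<in>f - {p}. peval (lin_img b' e' i) X)" for X
  define D where "D X \<longleftrightarrow> peval (lta_act b e f) X \<noteq> peval (lta_act b' e' f) X" for X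
  have factor: "peval (lta_act b e f) X \<longleftrightarrow> P X \<and> L X"
    "peval (lta_act b' e' f) X \<longleftrightarrow> P' X \<and> L' X" for X
    using f(2) unfolding P_def P'_def L_def L'_def peval_lta_act[OF f(1)] by blast+
  have D_g: "D X \<longleftrightarrow> peval (lta_act bc ec g) X \<noteq> peval (lta_act bc' ec' g) X" for X
  proof -
    have "peval (padd (lta_act b e f) (lta_act bc ec g)) X
        = peval (padd (lta_act b' e' f) (lta_act bc' ec' g)) X"
      by (simp only: eq)
    then show ?thesis
      unfolding D_def peval_padd[OF finite_lta_act finite_lta_act] by blast
  qed
  \<comment> \<open>The orbit elements of \<open>g\<close> only involve variables below \<open>q\<close>.\<close>
  have D_flip: "D (flip i X) \<longleftrightarrow> D X" if "q \<le> i" for i X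
  proof -
    have "i \<notin> {..<q}"
      using that by simp
    then show ?thesis
      unfolding D_g by (simp add: peval_flip_other[OF lta_act_vars[OF g]])
  qed
  have "peval (lin_img b0 e0 i) (flip p X) \<longleftrightarrow> peval (lin_img b0 e0 i) X"
    if "i \<in> f - {p}" for b0 e0 i X
    using that f(5) by (intro peval_flip_other[OF lin_img_vars]) auto
  then have P_flip: "P (flip p X) \<longleftrightarrow> P X" "P' (flip p X) \<longleftrightarrow> P' X" for X
    unfolding P_def P'_def by auto
  have "P X \<longleftrightarrow> P' X" for X
    using D_flip[of p X] f(4) P_flip[of X]
      peval_lin_img_flip[of b e p X] peval_lin_img_flip[of b' e' p X]
    unfolding D_def factor L_def L'_def by auto
  then have D_imp: "D X \<Longrightarrow> peval (lin_img b e q) X" for X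
    using f(3,4) unfolding D_def factor P_def by auto
  show "peval (lta_act b e f) X \<longleftrightarrow> peval (lta_act b' e' f) X" for X
    using D_imp[of X] D_imp[of "flip q X"] D_flip[of q X] peval_lin_img_flip[of b e q X]
    unfolding D_def by auto
qed

lemma inj_on_padd_lta_orbit:
  assumes "finite f" "p \<in> f" "q \<in> f" "q < p" "\<forall>i\<in>f. i \<le> p"
    and "finite g" "\<forall>j\<in>g. j < q"
  shows "inj_on (\<lambda>(a, c). padd a c) (lta_orbit m f \<times> lta_orbit m g)"
proof (rule inj_onI, clarify)
  fix a c a' c'
  assume "a \<in> lta_orbit m f" "a' \<in> lta_orbit m f" "c \<in> lta_orbit m g" "c' \<in> lta_orbit m g"
    and eq: "padd a c = padd a' c'"
  then obtain b e b' e' bc ec bc' ec' where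
    act: "a = lta_act b e f" "a' = lta_act b' e' f" "c = lta_act bc ec g" "c' = lta_act bc' ec' g"
    unfolding lta_orbit_def mem_Collect_eq by metis
  have "a = a'"
    using lta_act_eq_if_padd_eq[OF assms eq[unfolded act]] by (simp only: act)
  with eq show "a = a' \<and> c = c'"
    using padd_cancel_left by blast
qed

lemma card_sumset_eq_mult:
  assumes "inj_on (\<lambda>(a, c). padd a c) (A \<times> B)"
  shows "card (sumset A B) = card A * card B"
proof -
  have "sumset A B = (\<lambda>(a, c). padd a c) ` (A \<times> B)"
    unfolding sumset_def by auto
  with assms show ?thesis
    by (simp add: card_image card_cartesian_product)
qed

lemma sumset_commute: "sumset A B = sumset B A"
  unfolding sumset_def padd_def by blast

lemma ind_list_nth_mem: "finite u \<Longrightarrow> k < card u \<Longrightarrow> ind_list u ! k \<in> u"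
  unfolding ind_list_def by (metis length_sorted_list_of_set nth_mem set_sorted_list_of_set)

lemma le_ind_list_last:
  assumes "finite u" and "i \<in> u"
  shows "i \<le> ind_list u ! (card u - 1)"
proof -
  have len: "length (ind_list u) = card u" and "sorted (ind_list u)"
    unfolding ind_list_def by simp_all
  obtain k where "k < card u" "ind_list u ! k = i"
    using assms len unfolding ind_list_def by (metis in_set_conv_nth set_sorted_list_of_set)
  with \<open>sorted (ind_list u)\<close> len show ?thesis
    using sorted_nth_mono[of "ind_list u" k "card u - 1"] by simp
qed

theorem mainTheorem11:
  fixes m s :: nat and I :: "nat set set" and f g :: "nat set"
  assumes "decreasing m I"
    and "f \<in> I" and "g \<in> I"
    and "pdeg f = s" and "pdeg g = s" and "s \<ge> 2"
    and "(ind_list f ! (s-1) > ind_list f ! (s-2) \<and> ind_list f ! (s-2) > ind_list g ! (s-1))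
       \<or> (ind_list g ! (s-1) > ind_list g ! (s-2) \<and> ind_list g ! (s-2) > ind_list f ! (s-1))"
  shows "card (sumset (lta_orbit m f) (lta_orbit m g)) = card (lta_orbit m f) * card (lta_orbit m g)"
proof -
  have deg: "card u = s \<Longrightarrow> finite u" for u :: "nat set"
    using \<open>s \<ge> 2\<close> by (metis card.infinite not_numeral_le_zero)
  have one_side: "card (sumset (lta_orbit m u) (lta_orbit m v)) = card (lta_orbit m u) * card (lta_orbit m v)"
    if "card u = s" "card v = s"
      and "ind_list u ! (s-1) > ind_list u ! (s-2)" "ind_list u ! (s-2) > ind_list v ! (s-1)" for u v
  proof (rule card_sumset_eq_mult[OF inj_on_padd_lta_orbit])
    have fin: "finite u" "finite v"
      using that(1,2) by (simp_all add: deg)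
    then show "finite u" "finite v" .
    show "ind_list u ! (s-1) \<in> u" "ind_list u ! (s-2) \<in> u"
      using fin that(1) \<open>s \<ge> 2\<close> by (simp_all add: ind_list_nth_mem)
    show "ind_list u ! (s-2) < ind_list u ! (s-1)"
      using that(3) .
    show "\<forall>i\<in>u. i \<le> ind_list u ! (s-1)"
      using fin that(1) le_ind_list_last by blast
    show "\<forall>j\<in>v. j < ind_list u ! (s-2)"
      using fin that(2,4) le_ind_list_last by (blast intro: le_less_trans)
  qed
  have card: "card f = s" "card g = s"
    using assms(4,5) unfolding pdeg_def by simp_all
  from assms(7) show ?thesis
  proof (elim disjE conjE)
    assume "ind_list f ! (s-2) < ind_list f ! (s-1)" "ind_list g ! (s-1) < ind_list f ! (s-2)"
    then show ?thesis
      by (rule one_side[OF card])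
  next
    assume "ind_list g ! (s-2) < ind_list g ! (s-1)" "ind_list f ! (s-1) < ind_list g ! (s-2)"
    then have "card (sumset (lta_orbit m g) (lta_orbit m f)) = card (lta_orbit m g) * card (lta_orbit m f)"
      by (rule one_side[OF card(2,1)])
    then show ?thesis
      by (simp add: sumset_commute[of "lta_orbit m f"] mult.commute)
  qed
qed

end
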